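(* Let $\mathbf{C}$ be the Cantor set with a fixed compatible metric $\mathrm{dist}$, let $X \subset \mathbf{C}$, and let $f : X \to Y$ be a clopen-LC function from $X$ onto a separable metrizable space $Y$. Assume $f^{-1}(y)$ is compact for every $y \in Y$. For $n = 1,2,\dots$, let $X_n$ be the union of all fibers $f^{-1}(y)$, $y \in Y$, with the following property: there exist a sequence $y_k \to y$ in $Y$ with $y_k \neq y$ for all $k$ and $y_k \neq y_j$ for $k \neq j$, points $x_k \in f^{-1}(y_k)$, and a point $\tilde{x}_y \in \mathbf{C}$ such that $x_k \to \tilde{x}_y$ and $\mathrm{dist}(\tilde{x}_y, f^{-1}(y)) > 1/n$. Let $Y_n = f(X_n)$. Then the restriction $f|_{X_n} : X_n \to Y_n$ is an open function.
   Context: All spaces are separable metrizable. A subset of a topological space is an LC-set if it is the intersection of an open set and a closed set. A function is open if it maps open sets to open sets of its image space. A function $f : X \to Y$ is clopen-LC if for every subset $U \subset X$ that is clopen in $X$, the image $f(U)$ is an LC-set in $Y$. Note that $X_n = f^{-1}(Y_n)$ since $X_n$ is a union of fibers. *)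

theory Defs
  imports "HOL-Analysis.Analysis"
begin

definition cantor_set :: "real set" where
  "cantor_set = {x. \<exists>a::nat \<Rightarrow> nat. (\<forall>k. a k \<in> {0, 2}) \<and>
                      x = (\<Sum>k. real (a k) / 3 ^ Suc k)}"

definition LC_set :: "'a topology \<Rightarrow> 'a set \<Rightarrow> bool" where
  "LC_set T S \<longleftrightarrow> (\<exists>U V. openin T U \<and> closedin T V \<and> S = U \<inter> V)"

definition clopen_LC :: "'a topology \<Rightarrow> 'b topology \<Rightarrow> ('a \<Rightarrow> 'b) \<Rightarrow> bool" where
  "clopen_LC X Y f \<longleftrightarrow> (\<forall>U. closedin X U \<and> openin X U \<longrightarrow> LC_set Y (f ` U))"

definition dist_to_set :: "('a \<Rightarrow> 'a \<Rightarrow> real) \<Rightarrow> 'a \<Rightarrow> 'a set \<Rightarrow> real" where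
  "dist_to_set d x A = Inf ((\<lambda>z. d x z) ` A)"

definition X_n ::
  "real set \<Rightarrow> (real \<Rightarrow> real \<Rightarrow> real) \<Rightarrow> real set \<Rightarrow> 'b topology \<Rightarrow> (real \<Rightarrow> 'b) \<Rightarrow> nat \<Rightarrow> real set"
where
  "X_n C d X Y f n = \<Union> { {x \<in> X. f x = y} | y. y \<in> topspace Y \<and>
      (\<exists>yk :: nat \<Rightarrow> 'b. \<exists>xk :: nat \<Rightarrow> real. \<exists>x'.
          (\<forall>k. yk k \<in> topspace Y) \<and> limitin Y yk y sequentially \<and>
          (\<forall>k. yk k \<noteq> y) \<and> inj yk \<and>
          (\<forall>k. xk k \<in> X \<and> f (xk k) = yk k) \<and>
          x' \<in> C \<and> limitin (top_of_set C) xk x' sequentially \<and>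
          dist_to_set d x' {x \<in> X. f x = y} > 1 / real n) }"

end

theory Submission
  imports Defs
begin

(* Suppose the restriction of f to X_n is not open: there are U = X_n \<inter> V (V open) and
   x \<in> U with values y_j \<in> f(X_n) - f(U) converging to f x.  Each y_j has witnesses
   x_{j,k} \<rightarrow> t_j with dist(t_j, f\<^sup>-\<^sup>1(y_j)) > 1/n, and by compactness of the Cantor
   set t_j \<rightarrow> r along a subsequence.  Since the Cantor set contains no interval, there
   are intervals [a,b] \<subseteq> V around x and [c,e] around r (inside the 1/(2n)-ball of r)
   whose endpoints lie outside the Cantor set; so U' = X \<inter> ([a,b] \<union> [c,e]) is clopen
   in X and f(U') = G \<inter> F is an LC-set.  For large j, y_j \<in> G (as f x \<in> G) and
   y_j \<in> F (as f(x_{j,k}) \<in> f(U') converge to y_j), so the fibre of y_j meets U'.  But it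
   misses [a,b] (since y_j \<notin> f(U)) and [c,e] (it is more than 1/n away from t_j). *)

section \<open>The Cantor set\<close>

definition ternary :: "(nat \<Rightarrow> real) \<Rightarrow> real" where
  "ternary a = (\<Sum>k. a k / 3 ^ Suc k)"

definition cantor_digits :: "(nat \<Rightarrow> real) set" where
  "cantor_digits = {a. \<forall>k. a k \<in> {0,2}}"

lemma sums_geometric_thirds: "(\<lambda>k. 2 / (3::real) ^ Suc k) sums 1"
proof -
  have "(\<lambda>k. (2/3) * (1/3::real) ^ k) sums ((2/3) * (1 / (1 - 1/3)))"
    by (intro sums_mult geometric_sums) auto
  then show ?thesis by (simp add: power_divide field_simps)
qed

lemma cantor_digit_term_bound:
  "a \<in> cantor_digits \<Longrightarrow> norm (a k / 3 ^ Suc k) \<le> 2 / (3::real) ^ Suc k"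
  unfolding cantor_digits_def by (cases "a k = 0") auto

lemma summable_ternary: "a \<in> cantor_digits \<Longrightarrow> summable (\<lambda>k. a k / 3 ^ Suc k)"
  by (rule summable_comparison_test[OF _ sums_summable[OF sums_geometric_thirds]])
    (metis cantor_digit_term_bound)

lemma cantor_digits_shift: "a \<in> cantor_digits \<Longrightarrow> (\<lambda>i. a (i + k)) \<in> cantor_digits"
  unfolding cantor_digits_def by auto

lemma ternary_split:
  assumes "a \<in> cantor_digits"
  shows "ternary a = a 0 / 3 + ternary (\<lambda>i. a (Suc i)) / 3"
proof -
  have tail: "(\<lambda>i. a (Suc i)) \<in> cantor_digits"
    using cantor_digits_shift[OF assms, of 1] by simp
  have "ternary a = (\<Sum>k. a (Suc k) / 3 ^ Suc (Suc k)) + a 0 / 3"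
    unfolding ternary_def using suminf_split_head[OF summable_ternary[OF assms]] by simp
  also have "(\<Sum>k. a (Suc k) / 3 ^ Suc (Suc k)) = (\<Sum>k. (a (Suc k) / 3 ^ Suc k) / 3)"
    by (simp add: field_simps)
  also have "\<dots> = ternary (\<lambda>i. a (Suc i)) / 3"
    unfolding ternary_def by (rule suminf_divide[OF summable_ternary[OF tail]])
  finally show ?thesis by simp
qed

lemma ternary_bounds:
  assumes "a \<in> cantor_digits"
  shows "0 \<le> ternary a" "ternary a \<le> 1"
proof -
  have digit: "a k = 0 \<or> a k = 2" for k using assms by (auto simp: cantor_digits_def)
  show "0 \<le> ternary a"
    unfolding ternary_def using digit
    by (intro suminf_nonneg[OF summable_ternary[OF assms]]) (metis divide_nonneg_pos
        order.refl zero_le_numeral zero_less_numeral zero_less_power)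
  have "ternary a \<le> (\<Sum>k. 2 / (3::real) ^ Suc k)"
    unfolding ternary_def using digit
    by (intro suminf_le[OF _ summable_ternary[OF assms] sums_summable[OF sums_geometric_thirds]])
      (metis divide_right_mono order.refl zero_le_numeral zero_le_power)
  then show "ternary a \<le> 1" using sums_geometric_thirds by (simp add: sums_iff)
qed

lemma ternary_in_outer_thirds:
  assumes "a \<in> cantor_digits"
  shows "ternary a \<in> {0..1/3} \<union> {2/3..1}"
proof -
  have tail: "(\<lambda>i. a (Suc i)) \<in> cantor_digits"
    using cantor_digits_shift[OF assms, of 1] by simp
  have "a 0 = 0 \<or> a 0 = 2" using assms by (auto simp: cantor_digits_def)
  then show ?thesis using ternary_bounds[OF tail] ternary_split[OF assms] by auto
qed

lemma ternary_scale:
  assumes "a \<in> cantor_digits"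
  shows "\<exists>N::int. 3 ^ k * ternary a = N + ternary (\<lambda>i. a (i + k))"
proof (induction k)
  case 0
  then show ?case by (intro exI[of _ 0]) simp
next
  case (Suc k)
  then obtain N :: int where N: "3 ^ k * ternary a = N + ternary (\<lambda>i. a (i + k))" by blast
  have "a k = 0 \<or> a k = 2" using assms by (auto simp: cantor_digits_def)
  then obtain m :: int where m: "a k = m" by (metis of_int_0 of_int_numeral)
  have "3 ^ Suc k * ternary a = 3 * N + 3 * ternary (\<lambda>i. a (i + k))" using N by simp
  also have "3 * ternary (\<lambda>i. a (i + k)) = a k + ternary (\<lambda>i. a (i + Suc k))"
    using ternary_split[OF cantor_digits_shift[OF assms]] by simp
  finally have "3 ^ Suc k * ternary a = (3 * N + m) + ternary (\<lambda>i. a (i + Suc k))"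
    using m by simp
  then show ?case by blast
qed

lemma cantor_set_eq: "cantor_set = ternary ` cantor_digits"
proof
  show "cantor_set \<subseteq> ternary ` cantor_digits"
  proof
    fix x assume "x \<in> cantor_set"
    then obtain a :: "nat \<Rightarrow> nat"
      where a: "\<forall>k. a k \<in> {0,2}" "x = (\<Sum>k. real (a k) / 3 ^ Suc k)"
      unfolding cantor_set_def by blast
    then have "(\<lambda>k. real (a k)) \<in> cantor_digits" "x = ternary (\<lambda>k. real (a k))"
      by (auto simp: cantor_digits_def ternary_def)
    then show "x \<in> ternary ` cantor_digits" by blast
  qed
next
  show "ternary ` cantor_digits \<subseteq> cantor_set"
  proof
    fix x assume "x \<in> ternary ` cantor_digits"
    then obtain b where b: "b \<in> cantor_digits" "x = ternary b" by blast
    define a where "a k = (if b k = 0 then 0 else (2::nat))" for k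
    have "\<forall>k. real (a k) = b k" using b(1) by (auto simp: cantor_digits_def a_def)
    then have "x = (\<Sum>k. real (a k) / 3 ^ Suc k)" using b(2) by (simp add: ternary_def)
    moreover have "\<forall>k. a k \<in> {0,2}" by (simp add: a_def)
    ultimately show "x \<in> cantor_set" unfolding cantor_set_def by blast
  qed
qed

lemma removed_midpoint_not_in_cantor_set: "(M + 1/2) / 3 ^ k \<notin> cantor_set" for M :: int
proof
  assume "(M + 1/2) / 3 ^ k \<in> cantor_set"
  then obtain a where a: "a \<in> cantor_digits" "ternary a = (M + 1/2) / 3 ^ k"
    using cantor_set_eq by (metis imageE)
  obtain N :: int where N: "3 ^ k * ternary a = N + ternary (\<lambda>i. a (i + k))"
    using ternary_scale[OF a(1)] by blast
  have "ternary (\<lambda>i. a (i + k)) = of_int (M - N) + 1/2" using N a(2) by simp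
  then have "of_int (M - N) \<in> {-1/2..(-1/6::real)} \<union> {1/6..1/2}"
    using ternary_in_outer_thirds[OF cantor_digits_shift[of a k, OF a(1)]] by auto
  then have "M - N > -1" "M - N < 1" "M - N \<noteq> 0" by auto
  then show False by linarith
qed

text \<open>The Cantor set contains no interval: these midpoints are dense.\<close>

lemma cantor_set_gap:
  assumes "a < b"
  shows "\<exists>c. a < c \<and> c < b \<and> c \<notin> cantor_set"
proof -
  obtain k where k: "(1/3::real) ^ k < (b - a) / 2"
    using real_arch_pow_inv[of "(b - a) / 2" "1/3"] assms by auto
  define w where "w = (3::real) ^ k * a"
  define c where "c = (of_int (floor w + 1) + 1/2) / (3::real) ^ k"
  have pos: "(0::real) < 3 ^ k" by simp
  have "a < c" unfolding c_def w_def using pos by (simp add: field_simps) linarith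
  moreover have "c < b"
  proof -
    have "c - a = (of_int (floor w) + 3/2 - w) / 3 ^ k"
      unfolding c_def w_def using pos by (simp add: field_simps)
    also have "\<dots> < 2 / 3 ^ k" using pos by (intro divide_strict_right_mono) linarith+
    also have "\<dots> < b - a" using k by (simp add: power_divide field_simps)
    finally show ?thesis by simp
  qed
  moreover have "c \<notin> cantor_set"
    unfolding c_def using removed_midpoint_not_in_cantor_set[of "floor w + 1" k] by simp
  ultimately show ?thesis by blast
qed

lemma cantor_gap_interval:
  assumes "open V" "x \<in> V"
  obtains a b where "a < x" "x < b" "a \<notin> cantor_set" "b \<notin> cantor_set" "{a..b} \<subseteq> V"
proof -
  obtain \<epsilon> where \<epsilon>: "\<epsilon> > 0" "ball x \<epsilon> \<subseteq> V" using assms open_contains_ball by blast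
  obtain a where a: "x - \<epsilon> < a" "a < x" "a \<notin> cantor_set" using cantor_set_gap[of "x - \<epsilon>" x] \<epsilon> by auto
  obtain b where b: "x < b" "b < x + \<epsilon>" "b \<notin> cantor_set" using cantor_set_gap[of x "x + \<epsilon>"] \<epsilon> by auto
  have "{a..b} \<subseteq> ball x \<epsilon>" using a b by (auto simp: dist_real_def)
  with that a b \<epsilon> show ?thesis by blast
qed

text \<open>Compactness: the digit sequences form a product of finite sets (Tychonoff), and
  the ternary value depends continuously on them.\<close>

lemma cantor_digits_PiE: "cantor_digits = PiE UNIV (\<lambda>_. {0,2::real})"
  unfolding cantor_digits_def by (auto simp: PiE_iff)

lemma compact_cantor_digits: "compact cantor_digits"
proof -
  have "compactin (product_topology (\<lambda>_. euclidean) UNIV) (PiE UNIV (\<lambda>_. {0,2::real}))"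
    by (subst compactin_PiE) auto
  then show ?thesis unfolding cantor_digits_PiE euclidean_product_topology by simp
qed

lemma continuous_on_ternary: "continuous_on cantor_digits ternary"
proof -
  have lim: "uniform_limit cantor_digits (\<lambda>n a. \<Sum>i<n. a i / 3 ^ Suc i)
      (\<lambda>a. \<Sum>i. a i / 3 ^ Suc i) sequentially"
    by (rule Weierstrass_m_test[OF cantor_digit_term_bound sums_summable[OF sums_geometric_thirds]])
  have "continuous_on cantor_digits (\<lambda>a. \<Sum>i<n. a i / 3 ^ Suc i :: real)" for n
    by (intro continuous_on_sum continuous_on_divide continuous_on_const
        continuous_on_subset[OF continuous_on_product_coordinates]) auto
  then show ?thesis
    using uniform_limit_theorem[OF always_eventually lim] unfolding ternary_def[abs_def] by simp
qed

lemma compact_cantor_set: "compact cantor_set"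
  unfolding cantor_set_eq
  by (rule compact_continuous_image[OF continuous_on_ternary compact_cantor_digits])

lemma clopen_interval_trace:
  fixes S :: "real set"
  assumes "a \<notin> S" "b \<notin> S"
  shows "closedin (top_of_set S) (S \<inter> {a..b})" "openin (top_of_set S) (S \<inter> {a..b})"
proof -
  show "closedin (top_of_set S) (S \<inter> {a..b})" by (intro closedin_closed_Int) simp
  have "S \<inter> {a..b} = S \<inter> {a<..<b}" using assms by (auto simp: less_le)
  then show "openin (top_of_set S) (S \<inter> {a..b})" by (simp add: openin_open_Int)
qed

lemma compatible_ball_gap_interval:
  assumes metric: "Metric_space cantor_set d"
    and compatible: "Metric_space.mtopology cantor_set d = top_of_set cantor_set"
    and "r \<in> cantor_set" "\<epsilon> > 0"
  obtains c e where "c < r" "r < e" "c \<notin> cantor_set" "e \<notin> cantor_set"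
    "\<And>t. t \<in> cantor_set \<Longrightarrow> t \<in> {c..e} \<Longrightarrow> d r t < \<epsilon>"
proof -
  interpret M: Metric_space cantor_set d by (rule metric)
  have "openin (top_of_set cantor_set) (M.mball r \<epsilon>)"
    using M.openin_mball compatible by metis
  then obtain W where W: "open W" "M.mball r \<epsilon> = cantor_set \<inter> W"
    by (auto simp: openin_open)
  have "r \<in> W" using W assms by auto
  with W(1) obtain c e
    where ce: "c < r" "r < e" "c \<notin> cantor_set" "e \<notin> cantor_set" and "{c..e} \<subseteq> W"
    by (rule cantor_gap_interval)
  show ?thesis
  proof (rule that[OF ce])
    fix t assume "t \<in> cantor_set" "t \<in> {c..e}"
    then have "t \<in> M.mball r \<epsilon>" using W(2) \<open>{c..e} \<subseteq> W\<close> by blast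
    then show "d r t < \<epsilon>" by simp
  qed
qed

lemma dist_to_set_le:
  assumes "\<And>z. z \<in> A \<Longrightarrow> 0 \<le> d x z" "z \<in> A"
  shows "dist_to_set d x A \<le> d x z"
  unfolding dist_to_set_def using assms by (intro cInf_lower bdd_belowI[of _ 0]) auto

lemma open_map_sequentially:
  assumes "metrizable_space Y" "f ` S \<subseteq> topspace Y"
    and no_approach: "\<And>U x ys. openin (subtopology T S) U \<Longrightarrow> x \<in> U \<Longrightarrow>
        range ys \<subseteq> f ` S - f ` U \<Longrightarrow> limitin Y ys (f x) sequentially \<Longrightarrow> False"
  shows "open_map (subtopology T S) (subtopology Y (f ` S)) f"
  unfolding open_map_def
proof (intro allI impI)
  fix U assume U: "openin (subtopology T S) U"
  define Z where "Z = subtopology Y (f ` S)"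
  obtain M \<rho> where "Metric_space M \<rho>" and Z: "Z = Metric_space.mtopology M \<rho>"
    using metrizable_space_subtopology[OF assms(1)] unfolding Z_def metrizable_space_def by blast
  interpret MZ: Metric_space M \<rho> by fact
  have topZ: "topspace Z = f ` S" using assms(2) by (auto simp: Z_def)
  have US: "U \<subseteq> S" using openin_subset[OF U] by simp
  have "closedin Z (f ` S - f ` U)"
    unfolding Z MZ.metric_closedin_iff_sequentially_closed
  proof (intro conjI allI impI)
    show "f ` S - f ` U \<subseteq> M" using topZ Z by auto
  next
    fix ys l
    assume ys: "range ys \<subseteq> f ` S - f ` U \<and> limitin MZ.mtopology ys l sequentially"
    then have l: "l \<in> f ` S" "limitin Y ys l sequentially"
      by (simp_all add: Z[symmetric] Z_def limitin_subtopology)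
    show "l \<in> f ` S - f ` U"
    proof
      show "l \<notin> f ` U" using l(2) ys no_approach[OF U] by blast
    qed (rule l(1))
  qed
  then have "openin Z (topspace Z - (f ` S - f ` U))" by blast
  moreover have "topspace Z - (f ` S - f ` U) = f ` U" using topZ US by blast
  ultimately show "openin (subtopology Y (f ` S)) (f ` U)" by (simp add: Z_def)
qed

lemma limit_of_images_in_closed:
  assumes "limitin Y (\<lambda>k. f (xk k)) y sequentially" "xk \<longlonglongrightarrow> t"
    and "open W" "t \<in> W" "\<And>k. xk k \<in> X" "X \<inter> W \<subseteq> U'"
    and "closedin Y F" "f ` U' \<subseteq> F"
  shows "y \<in> F"
proof (rule limitin_closedin[OF assms(1) assms(7)])
  have "\<forall>\<^sub>F k in sequentially. xk k \<in> W" using assms(2-4) by (rule topological_tendstoD)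
  then show "\<forall>\<^sub>F k in sequentially. f (xk k) \<in> F"
    by (rule eventually_mono) (use assms(5,6,8) in blast)
qed simp

section \<open>The sets X_n\<close>

definition far_witness ::
  "real set \<Rightarrow> (real \<Rightarrow> real \<Rightarrow> real) \<Rightarrow> real set \<Rightarrow> 'b topology \<Rightarrow> (real \<Rightarrow> 'b) \<Rightarrow> nat \<Rightarrow>
   'b \<Rightarrow> (nat \<Rightarrow> 'b) \<Rightarrow> (nat \<Rightarrow> real) \<Rightarrow> real \<Rightarrow> bool"
where
  "far_witness C d X Y f n y yk xk t \<longleftrightarrow>
     (\<forall>k. yk k \<in> topspace Y) \<and> limitin Y yk y sequentially \<and>
     (\<forall>k. yk k \<noteq> y) \<and> inj yk \<and>
     (\<forall>k. xk k \<in> X \<and> f (xk k) = yk k) \<and>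
     t \<in> C \<and> limitin (top_of_set C) xk t sequentially \<and>
     dist_to_set d t {x \<in> X. f x = y} > 1 / real n"

lemma mem_X_n:
  "z \<in> X_n C d X Y f n \<longleftrightarrow>
     z \<in> X \<and> f z \<in> topspace Y \<and> (\<exists>yk xk t. far_witness C d X Y f n (f z) yk xk t)"
  unfolding X_n_def far_witness_def by blast

lemma far_witness_fibre_far:
  assumes "Metric_space C d" "X \<subseteq> C" "far_witness C d X Y f n y yk xk t"
    and "z \<in> X" "f z = y"
  shows "1 / real n < d t z"
proof -
  interpret M: Metric_space C d by fact
  have "t \<in> C" "1 / real n < dist_to_set d t {x \<in> X. f x = y}"
    using assms(3) by (auto simp: far_witness_def)
  moreover have "dist_to_set d t {x \<in> X. f x = y} \<le> d t z"
    using assms(2,4,5) \<open>t \<in> C\<close> by (intro dist_to_set_le) auto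
  ultimately show ?thesis by linarith
qed

lemma far_witness_value_in_closed:
  assumes "far_witness C d X Y f n y yk xk t"
    and "open W" "t \<in> W" "X \<inter> W \<subseteq> U'" "closedin Y F" "f ` U' \<subseteq> F"
  shows "y \<in> F"
proof -
  have xk: "\<And>k. xk k \<in> X" "(\<lambda>k. f (xk k)) = yk" "xk \<longlonglongrightarrow> t"
    and lim: "limitin Y yk y sequentially"
    using assms(1) by (auto simp: far_witness_def limitin_subtopology)
  show ?thesis
    by (rule limit_of_images_in_closed[of Y f xk y t W X U' F]) (use xk lim assms in auto)
qed

lemma clopen_LC_two_intervals:
  assumes "X \<subseteq> cantor_set" "clopen_LC (top_of_set X) Y f"
    and "a \<notin> cantor_set" "b \<notin> cantor_set" "c \<notin> cantor_set" "e \<notin> cantor_set"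
  obtains G F where "openin Y G" "closedin Y F" "f ` (X \<inter> ({a..b} \<union> {c..e})) = G \<inter> F"
proof -
  have gaps: "a \<notin> X" "b \<notin> X" "c \<notin> X" "e \<notin> X" using assms by auto
  have split: "X \<inter> ({a..b} \<union> {c..e}) = (X \<inter> {a..b}) \<union> (X \<inter> {c..e})" by blast
  have "closedin (top_of_set X) (X \<inter> ({a..b} \<union> {c..e}))"
       "openin (top_of_set X) (X \<inter> ({a..b} \<union> {c..e}))"
    unfolding split using clopen_interval_trace[OF gaps(1,2)] clopen_interval_trace[OF gaps(3,4)]
    by auto
  then have "LC_set Y (f ` (X \<inter> ({a..b} \<union> {c..e})))"
    using assms(2) unfolding clopen_LC_def by blast
  with that show ?thesis unfolding LC_set_def by blast
qed

lemma far_witnesses_subsequence: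
  fixes ys :: "nat \<Rightarrow> 'b"
  assumes "\<And>j. \<exists>yk xk t. far_witness cantor_set d X Y f n (ys j) yk xk t"
  obtains YK XK T r \<sigma>
  where "\<And>j. far_witness cantor_set d X Y f n (ys j) (YK j) (XK j) (T j)"
    and "r \<in> cantor_set" "strict_mono \<sigma>" "(T \<circ> \<sigma>) \<longlonglongrightarrow> r"
proof -
  obtain YK XK T where W: "\<And>j. far_witness cantor_set d X Y f n (ys j) (YK j) (XK j) (T j)"
    using assms by metis
  then have T: "\<forall>j. T j \<in> cantor_set" by (simp add: far_witness_def)
  obtain r \<sigma> where r: "r \<in> cantor_set" "strict_mono \<sigma>" "(T \<circ> \<sigma>) \<longlonglongrightarrow> r"
    by (rule seq_compactE[OF compact_imp_seq_compact[OF compact_cantor_set] T])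
  show ?thesis by (rule that[OF W r])
qed

text \<open>A value y with witness limit t close to r cannot lie in the open part G of the
  LC-set f(X \<inter> ([a,b] \<union> [c,e])) when its fibre misses [a,b] and [c,e] lies in the
  1/(2n)-ball around r: otherwise y \<in> F as well, and a point of its fibre would lie
  in [c,e], within 1/n of t.\<close>

lemma far_value_outside_open_part:
  assumes metric: "Metric_space cantor_set d" and XC: "X \<subseteq> cantor_set"
    and W: "far_witness cantor_set d X Y f n y yk xk t"
    and t: "t \<in> {c<..<e}" "d t r < 1 / (2 * real n)" and r: "r \<in> cantor_set"
    and near_r: "\<And>s. s \<in> cantor_set \<Longrightarrow> s \<in> {c..e} \<Longrightarrow> d r s < 1 / (2 * real n)"
    and misses_ab: "\<And>z. z \<in> X \<Longrightarrow> f z = y \<Longrightarrow> z \<notin> {a..b}"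
    and GF: "closedin Y F" "f ` (X \<inter> ({a..b} \<union> {c..e})) = G \<inter> F"
  shows "y \<notin> G"
proof
  interpret M: Metric_space cantor_set d by (rule metric)
  assume "y \<in> G"
  moreover have "y \<in> F"
  proof (rule far_witness_value_in_closed[OF W open_greaterThanLessThan t(1) _ GF(1)])
    show "X \<inter> {c<..<e} \<subseteq> X \<inter> ({a..b} \<union> {c..e})" by auto
    show "f ` (X \<inter> ({a..b} \<union> {c..e})) \<subseteq> F" using GF(2) by blast
  qed
  ultimately have "y \<in> f ` (X \<inter> ({a..b} \<union> {c..e}))" using GF(2) by blast
  then obtain z where z: "z \<in> X" "z \<in> {a..b} \<union> {c..e}" "f z = y" by blast
  then have "z \<in> {c..e}" using misses_ab by blast
  then have "d r z < 1 / (2 * real n)" using near_r z(1) XC by auto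
  moreover have "t \<in> cantor_set" using W by (simp add: far_witness_def)
  then have "d t z \<le> d t r + d r z" using M.triangle r z(1) XC by blast
  moreover have "1 / (2 * real n) + 1 / (2 * real n) = 1 / real n" by simp
  ultimately have "d t z < 1 / real n" using t(2) by linarith
  then show False using far_witness_fibre_far[OF metric XC W z(1,3)] by linarith
qed

lemma X_n_values_not_approached:
  fixes d :: "real \<Rightarrow> real \<Rightarrow> real" and f :: "real \<Rightarrow> 'b"
  assumes metric: "Metric_space cantor_set d"
    and compatible: "Metric_space.mtopology cantor_set d = top_of_set cantor_set"
    and XC: "X \<subseteq> cantor_set" and cLC: "clopen_LC (top_of_set X) Y f" and n: "n \<ge> 1"
    and U: "openin (top_of_set (X_n cantor_set d X Y f n)) U" "x \<in> U"
    and ys: "range ys \<subseteq> f ` X_n cantor_set d X Y f n - f ` U" "limitin Y ys (f x) sequentially"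
  shows False
proof -
  interpret M: Metric_space cantor_set d by (rule metric)
  define XN where "XN = X_n cantor_set d X Y f n"
  have radius: "1 / (2 * real n) > 0" using n by simp
  obtain V where V: "open V" "U = XN \<inter> V" using U(1) by (auto simp: openin_open XN_def)
  have xX: "x \<in> X" using U(2) V(2) by (auto simp: XN_def mem_X_n)
  obtain a b where ab: "a < x" "x < b" "a \<notin> cantor_set" "b \<notin> cantor_set" "{a..b} \<subseteq> V"
    using cantor_gap_interval[OF V(1)] U(2) V(2) by blast
  have ys_in: "ys j \<in> f ` XN" "ys j \<notin> f ` U" for j
    using range_subsetD[OF ys(1), of j] unfolding XN_def by auto
  have ys_val: "\<exists>w \<in> XN. f w = ys j" for j using ys_in(1)[of j] by auto
  \<comment> \<open>the fibres of the values ys j lie in X_n but miss U, hence miss [a,b]\<close>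
  have misses_ab: "z \<notin> {a..b}" if "z \<in> X" "f z = ys j" for z j
  proof
    assume "z \<in> {a..b}"
    moreover have "z \<in> XN" using ys_val[of j] that by (auto simp: XN_def mem_X_n)
    ultimately have "z \<in> U" using V(2) ab(5) by blast
    then show False using ys_in(2)[of j] that by (metis imageI)
  qed
  have "\<exists>yk xk t. far_witness cantor_set d X Y f n (ys j) yk xk t" for j
    using ys_val[of j] by (auto simp: XN_def mem_X_n)
  then obtain YK XK T r \<sigma>
    where W: "\<And>j. far_witness cantor_set d X Y f n (ys j) (YK j) (XK j) (T j)"
      and r: "r \<in> cantor_set" "strict_mono \<sigma>" "(T \<circ> \<sigma>) \<longlonglongrightarrow> r"
    by (rule far_witnesses_subsequence[where ys = ys]) blast
  obtain c e where ce: "c < r" "r < e" "c \<notin> cantor_set" "e \<notin> cantor_set"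
    and near_r: "\<And>s. s \<in> cantor_set \<Longrightarrow> s \<in> {c..e} \<Longrightarrow> d r s < 1 / (2 * real n)"
    by (rule compatible_ball_gap_interval[OF metric compatible r(1) radius]) blast
  obtain G F where GF: "openin Y G" "closedin Y F" "f ` (X \<inter> ({a..b} \<union> {c..e})) = G \<inter> F"
    by (rule clopen_LC_two_intervals[OF XC cLC ab(3,4) ce(3,4)]) blast
  have "f x \<in> f ` (X \<inter> ({a..b} \<union> {c..e}))" using xX ab by auto
  then have "f x \<in> G" using GF(3) by blast
  then have ev_G: "\<forall>\<^sub>F j in sequentially. ys (\<sigma> j) \<in> G"
    using ys(2) GF(1) r(2) unfolding limitin_def by (auto intro: eventually_subseq)
  have ev_T: "\<forall>\<^sub>F j in sequentially. T (\<sigma> j) \<in> {c<..<e}"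
    using r(3) ce unfolding tendsto_def by (auto simp: comp_def)
  have "T j \<in> cantor_set" for j using W by (simp add: far_witness_def)
  then have "limitin M.mtopology (T \<circ> \<sigma>) r sequentially"
    unfolding compatible using r by (simp add: limitin_subtopology)
  then have "\<forall>\<^sub>F j in sequentially. T (\<sigma> j) \<in> cantor_set \<and> d (T (\<sigma> j)) r < 1 / (2 * real n)"
    unfolding M.limitin_metric using radius by simp
  then have ev_d: "\<forall>\<^sub>F j in sequentially. d (T (\<sigma> j)) r < 1 / (2 * real n)"
    by (rule eventually_mono) simp
  obtain i where i: "ys i \<in> G" "T i \<in> {c<..<e}" "d (T i) r < 1 / (2 * real n)"
    using eventually_happens'[OF _ eventually_conj[OF ev_G eventually_conj[OF ev_T ev_d]]] by auto
  moreover have "ys i \<notin> G"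
    using far_value_outside_open_part[OF metric XC W[of i] i(2,3) r(1) near_r misses_ab[of _ i] GF(2,3)] .
  ultimately show False by blast
qed

theorem lemma1:
  fixes d :: "real \<Rightarrow> real \<Rightarrow> real"
    and X :: "real set"
    and Y :: "'b topology"
    and f :: "real \<Rightarrow> 'b"
    and n :: nat
  assumes metric: "Metric_space cantor_set d"
    and compatible: "Metric_space.mtopology cantor_set d = top_of_set cantor_set"
    and XC: "X \<subseteq> cantor_set"
    and Ysep: "separable_space Y"
    and Ymet: "metrizable_space Y"
    and onto: "f ` X = topspace Y"
    and cLC: "clopen_LC (top_of_set X) Y f"
    and fibres: "\<And>y. y \<in> topspace Y \<Longrightarrow> compactin (top_of_set X) {x \<in> X. f x = y}"
    and n: "n \<ge> 1"
  shows "open_map (top_of_set (X_n cantor_set d X Y f n))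
                  (subtopology Y (f ` X_n cantor_set d X Y f n)) f"
proof (rule open_map_sequentially[OF Ymet])
  show "f ` X_n cantor_set d X Y f n \<subseteq> topspace Y" using onto by (auto simp: mem_X_n)
qed (rule X_n_values_not_approached[OF metric compatible XC cLC n])

end
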